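(* Let $Q=(I,E)$ be a symmetric quiver with an even number of edges between any two different vertices and an odd number of loops at every vertex, and let $(d,v)\in\mathbb{N}^I\times\mathbb{Z}$. Then $S^d_v$ consists of the partitions $(d_i)_{i=1}^k$ of $d$ such that $v\cdot\underline{d_i}/\underline{d}\in\mathbb{Z}$ for all $1\le i\le k$. In particular, if $\gcd(v,\underline d)=1$ then $S^d_v$ contains only the one-term partition of $d$.
   Context: For $e=(e^i)\in\mathbb{N}^I$, $\underline e=\sum_ie^i$. $R(d)=\bigoplus_{(i\to j)\in E}\mathrm{Hom}(V^i,V^j)$, $\dim V^i=d^i$, $G(d)=\prod GL(V^i)$, Lie algebra $\mathfrak{g}(d)$, diagonal torus $T(d)$ with weights $\beta^i_a$, $\tau_d=\frac1{\underline d}\sum_{i,a}\beta^i_a$. For a cocharacter $\lambda$ of $T(d)$, $n_\lambda=\langle\lambda,\det(R(d)^\vee)^{\lambda>0}\rangle-\langle\lambda,\det(\mathfrak{g}(d)^\vee)^{\lambda>0}\rangle$, where $V^{\lambda>0}$ is the span of weights pairing positively with $\lambda$. A partition of $d$ is a collection of nonzero $d_1,\dots,d_k\in\mathbb{N}^I$ with sum $d$; a cocharacter $\lambda$ has associated partition $(d_j)$ if the $j$-th distinct value of $\langle\lambda,\beta^i_a\rangle$ occurs $d^i_j$ times for each $i$. $S^d_v$ is the set of partitions of $d$ such that $n_\lambda/2+\langle\lambda,v\tau_d\rangle\in\mathbb{Z}$ for every cocharacter $\lambda$ with that associated partition. *)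

theory Defs
  imports Complex_Main
begin

text \<open>Quiver Q = (I,E): the vertex set I is a finite type 'i; the edges are recorded by
  their multiplicities: e i j = number of arrows i -> j.  The diagonal torus T(d) has weights
  beta^i_a, for i in I and a < d i (0-based).  A cocharacter lambda of T(d) is
  given by the integers lam i a = <lambda, beta^i_a> (for a < d i; other values are irrelevant).\<close>

definition dtot :: "('i::finite \<Rightarrow> nat) \<Rightarrow> nat" where
  "dtot d = (\<Sum>i\<in>UNIV. d i)"

text \<open><lambda, det(W^vee)^{lambda>0}>: sum of the positive pairings <lambda,w> over the weights w
  (with multiplicity) of W^vee.  Weights of R(d)^vee: beta^i_a - beta^j_b for each arrow i -> j;
  weights of g(d)^vee: beta^i_a - beta^i_b.\<close>

definition pospart :: "int \<Rightarrow> int" where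
  "pospart x = max x 0"

definition n_lambda :: "('i::finite \<Rightarrow> 'i \<Rightarrow> nat) \<Rightarrow> ('i \<Rightarrow> nat) \<Rightarrow> ('i \<Rightarrow> nat \<Rightarrow> int) \<Rightarrow> int" where
  "n_lambda e d lam =
     (\<Sum>i\<in>UNIV. \<Sum>j\<in>UNIV. int (e i j) * (\<Sum>a<d i. \<Sum>b<d j. pospart (lam i a - lam j b)))
   - (\<Sum>i\<in>UNIV. \<Sum>a<d i. \<Sum>b<d i. pospart (lam i a - lam i b))"

definition pair_vtau :: "('i::finite \<Rightarrow> nat) \<Rightarrow> int \<Rightarrow> ('i \<Rightarrow> nat \<Rightarrow> int) \<Rightarrow> real" where
  "pair_vtau d v lam = real_of_int v / real (dtot d) * real_of_int (\<Sum>i\<in>UNIV. \<Sum>a<d i. lam i a)"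

definition is_partition :: "('i::finite \<Rightarrow> nat) \<Rightarrow> ('i \<Rightarrow> nat) list \<Rightarrow> bool" where
  "is_partition d p \<longleftrightarrow> (\<forall>c\<in>set p. \<exists>i. c i \<noteq> 0) \<and> (\<forall>i. (\<Sum>c\<leftarrow>p. c i) = d i)"

definition cochar_values :: "('i::finite \<Rightarrow> nat) \<Rightarrow> ('i \<Rightarrow> nat \<Rightarrow> int) \<Rightarrow> int set" where
  "cochar_values d lam = {lam i a | i a. a < d i}"

definition assoc_partition :: "('i::finite \<Rightarrow> nat) \<Rightarrow> ('i \<Rightarrow> nat \<Rightarrow> int) \<Rightarrow> ('i \<Rightarrow> nat) list" where
  "assoc_partition d lam =
     map (\<lambda>c. \<lambda>i. card {a. a < d i \<and> lam i a = c}) (sorted_list_of_set (cochar_values d lam))"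

definition S_set :: "('i::finite \<Rightarrow> 'i \<Rightarrow> nat) \<Rightarrow> ('i \<Rightarrow> nat) \<Rightarrow> int \<Rightarrow> ('i \<Rightarrow> nat) list set" where
  "S_set e d v = {p. is_partition d p \<and>
      (\<forall>lam. assoc_partition d lam = p \<longrightarrow>
         real_of_int (n_lambda e d lam) / 2 + pair_vtau d v lam \<in> \<int>)}"

end

theory Submission
  imports Defs
begin

text \<open>Under the parity hypotheses every n_lambda is even: subtracting the g(d)-term turns
  the loop count e i i into the even number e i i - 1.
  So S^d_v is cut out by integrality of <lambda, v tau_d> = v / |d| * (sum_j c_j * |d_j|),
  where c_1 < ... < c_k are the distinct values of lambda, d_j the corresponding parts and
  |.| the total dimension. This is integral when every v * |d_j| / |d| is. Conversely, the
  cocharacters with values 2 l and 2 l + [l = j] on the l-th block have the same associated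
  partition, and their pairings differ by exactly v * |d_j| / |d|. When gcd (v, |d|) = 1
  this forces |d| to divide every |d_j|, leaving room for a single part only.\<close>

lemma even_n_lambda:
  assumes "\<And>i j. i \<noteq> j \<Longrightarrow> even (e i j)" and "\<And>i. odd (e i i)"
  shows "even (n_lambda e d lam)"
proof -
  define P where "P i j = (\<Sum>a<d i. \<Sum>b<d j. pospart (lam i a - lam j b))" for i j
  have row: "(\<Sum>j\<in>UNIV. (int (e i j) - of_bool (i = j)) * P i j)
      = (\<Sum>j\<in>UNIV. int (e i j) * P i j) - P i i" for i
    by (simp add: left_diff_distrib sum_subtractf)
  have "n_lambda e d lam = (\<Sum>i\<in>UNIV. \<Sum>j\<in>UNIV. int (e i j) * P i j) - (\<Sum>i\<in>UNIV. P i i)"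
    unfolding n_lambda_def P_def ..
  also have "\<dots> = (\<Sum>i\<in>UNIV. \<Sum>j\<in>UNIV. (int (e i j) - of_bool (i = j)) * P i j)"
    by (simp add: row sum_subtractf)
  also have "even \<dots>"
  proof (intro dvd_sum)
    fix i j
    show "even ((int (e i j) - of_bool (i = j)) * P i j)"
      using assms by (cases "i = j") auto
  qed
  finally show ?thesis .
qed

lemma S_set_eq_if_even_n_lambda:
  assumes "\<And>lam. even (n_lambda e d lam)"
  shows "S_set e d v = {p. is_partition d p \<and>
           (\<forall>lam. assoc_partition d lam = p \<longrightarrow> pair_vtau d v lam \<in> \<int>)}"
proof -
  have "real_of_int (n_lambda e d lam) / 2 \<in> \<int>" for lam
    using assms[of lam] by (elim evenE) simp
  then show ?thesis
    unfolding S_set_def by simp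
qed

lemma finite_cochar_values: "finite (cochar_values d lam)"
proof -
  have "cochar_values d lam = (\<Union>i. lam i ` {..<d i})"
    unfolding cochar_values_def by auto
  then show ?thesis by simp
qed

definition level_dim :: "('i::finite \<Rightarrow> nat) \<Rightarrow> ('i \<Rightarrow> nat \<Rightarrow> int) \<Rightarrow> int \<Rightarrow> 'i \<Rightarrow> nat" where
  "level_dim d lam c = (\<lambda>i. card {a. a < d i \<and> lam i a = c})"

lemma assoc_partition_eq_map_level_dim:
  "assoc_partition d lam = map (level_dim d lam) (sorted_list_of_set (cochar_values d lam))"
  unfolding assoc_partition_def level_dim_def ..

lemma set_assoc_partition:
  "set (assoc_partition d lam) = level_dim d lam ` cochar_values d lam"
  by (simp add: assoc_partition_eq_map_level_dim finite_cochar_values)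

lemma sum_weights_eq_sum_levels:
  "(\<Sum>i\<in>UNIV. \<Sum>a<d i. lam i a) =
     (\<Sum>c\<in>cochar_values d lam. c * int (dtot (level_dim d lam c)))"
proof -
  have "(\<Sum>a<d i. lam i a) = (\<Sum>c\<in>cochar_values d lam. c * int (level_dim d lam c i))" for i
  proof -
    have "(\<Sum>a<d i. lam i a) =
        (\<Sum>c\<in>cochar_values d lam. \<Sum>a\<in>{a. a \<in> {..<d i} \<and> lam i a = c}. lam i a)"
      by (rule sum.group[symmetric, OF _ finite_cochar_values]) (auto simp: cochar_values_def)
    also have "\<dots> = (\<Sum>c\<in>cochar_values d lam. c * int (level_dim d lam c i))"
      by (intro sum.cong) (simp_all add: level_dim_def)
    finally show ?thesis .
  qed
  then have "(\<Sum>i\<in>UNIV. \<Sum>a<d i. lam i a) =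
      (\<Sum>c\<in>cochar_values d lam. \<Sum>i\<in>UNIV. c * int (level_dim d lam c i))"
    by (simp add: sum.swap[of _ _ UNIV])
  then show ?thesis
    by (simp add: dtot_def sum_distrib_left)
qed

lemma pair_vtau_in_Ints:
  assumes "\<forall>c\<in>set (assoc_partition d lam). real_of_int v * real (dtot c) / real (dtot d) \<in> \<int>"
  shows "pair_vtau d v lam \<in> \<int>"
proof -
  have "pair_vtau d v lam = (\<Sum>c\<in>cochar_values d lam.
      real_of_int c * (real_of_int v * real (dtot (level_dim d lam c)) / real (dtot d)))"
    unfolding pair_vtau_def sum_weights_eq_sum_levels
    by (simp add: sum_distrib_left algebra_simps)
  also have "\<dots> \<in> \<int>"
    using assms by (intro Ints_sum Ints_mult) (auto simp: set_assoc_partition)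
  finally show ?thesis .
qed

lemma sorted_list_of_set_image_strict_mono:
  fixes g :: "nat \<Rightarrow> 'a::linorder"
  assumes "strict_mono g"
  shows "sorted_list_of_set (g ` {..<n}) = map g [0..<n]"
proof -
  have "sorted_wrt (<) (map g [0..<n])"
    using assms by (auto simp: sorted_wrt_map strict_mono_def sorted_wrt_iff_nth_less)
  moreover have "length (map g [0..<n]) = card (g ` {..<n})"
    using assms by (simp add: card_image strict_mono_imp_inj_on)
  ultimately show ?thesis
    by (subst sorted_list_of_set_unique[symmetric]) auto
qed

definition block_weights :: "('i \<Rightarrow> nat) list \<Rightarrow> (nat \<Rightarrow> int) \<Rightarrow> 'i \<Rightarrow> int list" where
  "block_weights p g i = concat (map (\<lambda>j. replicate ((p!j) i) (g j)) [0..<length p])"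

definition block_cochar :: "('i \<Rightarrow> nat) list \<Rightarrow> (nat \<Rightarrow> int) \<Rightarrow> 'i \<Rightarrow> nat \<Rightarrow> int" where
  "block_cochar p g i a = block_weights p g i ! a"

lemma length_block_weights: "length (block_weights p g i) = (\<Sum>c\<leftarrow>p. c i)"
  by (simp add: block_weights_def length_concat comp_def sum_list_sum_nth atLeast0LessThan)

lemma set_block_weights: "set (block_weights p g i) = g ` {j. j < length p \<and> (p!j) i \<noteq> 0}"
  by (auto simp: block_weights_def)

lemma count_block_weights:
  assumes "strict_mono g" and "j < length p"
  shows "length (filter (\<lambda>x. x = g j) (block_weights p g i)) = (p!j) i"
proof -
  have "length (filter (\<lambda>x. x = g j) (block_weights p g i))
      = (\<Sum>k<length p. if g k = g j then (p!k) i else 0)"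
    by (simp add: block_weights_def length_concat comp_def filter_concat filter_replicate
        sum_list_sum_nth atLeast0LessThan if_distrib cong: if_cong)
  also have "\<dots> = (p!j) i"
    using assms by (simp add: strict_mono_eq)
  finally show ?thesis .
qed

context
  fixes d :: "'i::finite \<Rightarrow> nat" and p :: "('i \<Rightarrow> nat) list"
  assumes partition: "is_partition d p"
begin

lemma length_block_weights_partition: "length (block_weights p g i) = d i"
  using partition by (simp add: length_block_weights is_partition_def)

lemma cochar_values_block_cochar: "cochar_values d (block_cochar p g) = g ` {..<length p}"
proof -
  have "cochar_values d (block_cochar p g) = (\<Union>i. set (block_weights p g i))"
    unfolding cochar_values_def block_cochar_def
    by (auto simp: in_set_conv_nth length_block_weights_partition) blast+
  also have "\<dots> = g ` {..<length p}"
  proof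
    show "(\<Union>i. set (block_weights p g i)) \<subseteq> g ` {..<length p}"
      by (auto simp: set_block_weights)
    show "g ` {..<length p} \<subseteq> (\<Union>i. set (block_weights p g i))"
    proof
      fix x assume "x \<in> g ` {..<length p}"
      then obtain j where j: "j < length p" "x = g j" by auto
      then obtain i where "(p!j) i \<noteq> 0"
        using partition nth_mem unfolding is_partition_def by blast
      then show "x \<in> (\<Union>i. set (block_weights p g i))"
        using j by (auto simp: set_block_weights)
    qed
  qed
  finally show ?thesis .
qed

lemma level_dim_block_cochar:
  assumes "strict_mono g" and "j < length p"
  shows "level_dim d (block_cochar p g) (g j) = p ! j"
proof
  fix i
  show "level_dim d (block_cochar p g) (g j) i = (p ! j) i"
    using count_block_weights[OF assms, of i]
    by (simp add: level_dim_def block_cochar_def length_filter_conv_card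
        length_block_weights_partition)
qed

lemma assoc_partition_block_cochar:
  assumes "strict_mono g"
  shows "assoc_partition d (block_cochar p g) = p"
  unfolding assoc_partition_eq_map_level_dim cochar_values_block_cochar
    sorted_list_of_set_image_strict_mono[OF assms]
  by (rule nth_equalityI) (simp_all add: level_dim_block_cochar assms)

lemma sum_block_cochar:
  assumes "strict_mono g"
  shows "(\<Sum>i\<in>UNIV. \<Sum>a<d i. block_cochar p g i a) = (\<Sum>j<length p. g j * int (dtot (p!j)))"
  unfolding sum_weights_eq_sum_levels cochar_values_block_cochar
  by (simp add: sum.reindex strict_mono_imp_inj_on assms level_dim_block_cochar)

lemma parts_in_Ints_if_pair_vtau_in_Ints:
  assumes pair: "\<forall>lam. assoc_partition d lam = p \<longrightarrow> pair_vtau d v lam \<in> \<int>"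
    and "c \<in> set p"
  shows "real_of_int v * real (dtot c) / real (dtot d) \<in> \<int>"
proof -
  obtain j where j: "j < length p" "c = p ! j"
    using \<open>c \<in> set p\<close> by (auto simp: in_set_conv_nth)
  define g0 :: "nat \<Rightarrow> int" where "g0 l = 2 * int l" for l
  define g1 :: "nat \<Rightarrow> int" where "g1 l = 2 * int l + of_bool (l = j)" for l
  have mono: "strict_mono g0" "strict_mono g1"
    by (auto simp: strict_mono_def g0_def g1_def)
  let ?pair = "\<lambda>g. real_of_int v / real (dtot d) *
    real_of_int (\<Sum>l<length p. g l * int (dtot (p!l)))"
  have "?pair g \<in> \<int>" if "strict_mono g" for g
    using pair assoc_partition_block_cochar[OF that]
    by (simp add: pair_vtau_def sum_block_cochar[OF that, symmetric])
  then have "?pair g1 - ?pair g0 \<in> \<int>"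
    using mono by (intro Ints_diff)
  also have "?pair g1 - ?pair g0 = real_of_int v / real (dtot d) *
      real_of_int (\<Sum>l<length p. (g1 l - g0 l) * int (dtot (p!l)))"
    by (simp add: right_diff_distrib left_diff_distrib sum_subtractf)
  also have "\<dots> = real_of_int v * real (dtot c) / real (dtot d)"
    using j by (simp add: g0_def g1_def)
  finally show ?thesis .
qed

lemma all_pair_vtau_in_Ints_iff:
  "(\<forall>lam. assoc_partition d lam = p \<longrightarrow> pair_vtau d v lam \<in> \<int>) \<longleftrightarrow>
     (\<forall>c\<in>set p. real_of_int v * real (dtot c) / real (dtot d) \<in> \<int>)"
  using pair_vtau_in_Ints parts_in_Ints_if_pair_vtau_in_Ints by blast

end

lemma dtot_eq_0_iff: "dtot c = 0 \<longleftrightarrow> (\<forall>i. c i = 0)"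
  by (simp add: dtot_def)

lemma sum_list_dtot_partition:
  assumes "is_partition d p"
  shows "(\<Sum>c\<leftarrow>p. dtot c) = dtot d"
proof -
  have "(\<Sum>c\<leftarrow>p. dtot c) = (\<Sum>i\<in>UNIV. \<Sum>c\<leftarrow>p. c i)"
    unfolding dtot_def by (induct p) (auto simp: sum.distrib)
  then show ?thesis
    using assms by (simp add: is_partition_def dtot_def)
qed

lemma dtot_le_partition:
  assumes "is_partition d p" and "c \<in> set p"
  shows "dtot c \<le> dtot d"
proof -
  have "c i \<le> (\<Sum>c'\<leftarrow>p. c' i)" for i
    using assms(2) by (induct p) auto
  then have "c i \<le> d i" for i
    using assms(1) by (simp add: is_partition_def)
  then show ?thesis
    unfolding dtot_def by (simp add: sum_mono)
qed

lemma partition_eq_single_if_coprime: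
  assumes partition: "is_partition d p" and coprime: "coprime v (int (dtot d))"
    and parts: "\<forall>c\<in>set p. real_of_int v * real (dtot c) / real (dtot d) \<in> \<int>"
    and nonzero: "\<exists>i. d i \<noteq> 0"
  shows "p = [d]"
proof -
  have "dtot c = dtot d" if c: "c \<in> set p" for c
  proof -
    have "real_of_int (v * int (dtot c)) / real_of_int (int (dtot d)) \<in> \<int>"
      using parts c by simp
    then have "int (dtot d) dvd v * int (dtot c)"
      using nonzero unfolding of_int_div_of_int_in_Ints_iff by (auto simp: dtot_eq_0_iff)
    then have "dtot d dvd dtot c"
      using coprime by (simp add: coprime_commute coprime_dvd_mult_right_iff)
    moreover have "dtot c \<noteq> 0"
      using partition c by (auto simp: is_partition_def dtot_eq_0_iff)
    ultimately show ?thesis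
      using dtot_le_partition[OF partition c] by (simp add: dvd_imp_le le_antisym)
  qed
  then have "length p * dtot d = dtot d"
    using sum_list_dtot_partition[OF partition] by (simp add: map_idI sum_list_triv cong: map_cong)
  then have "length p = 1"
    using nonzero by (auto simp: dtot_eq_0_iff)
  then obtain c where "p = [c]"
    by (cases p) auto
  with partition show ?thesis
    by (auto simp: is_partition_def)
qed

theorem proposition8p5:
  fixes e :: "'i::finite \<Rightarrow> 'i \<Rightarrow> nat" and d :: "'i \<Rightarrow> nat" and v :: int
  assumes sym: "\<And>i j. e i j = e j i"
    and even_edges: "\<And>i j. i \<noteq> j \<Longrightarrow> even (e i j)"
    and odd_loops: "\<And>i. odd (e i i)"
  shows "S_set e d v = {p. is_partition d p \<and>
            (\<forall>c\<in>set p. real_of_int v * real (dtot c) / real (dtot d) \<in> \<int>)}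
         \<and> (gcd v (int (dtot d)) = 1 \<and> (\<exists>i. d i \<noteq> 0) \<longrightarrow> S_set e d v = {[d]})"
proof -
  have S_set_eq: "S_set e d v = {p. is_partition d p \<and>
      (\<forall>c\<in>set p. real_of_int v * real (dtot c) / real (dtot d) \<in> \<int>)}"
    using S_set_eq_if_even_n_lambda[OF even_n_lambda[of e, OF even_edges odd_loops]]
    by (simp add: all_pair_vtau_in_Ints_iff cong: conj_cong)
  moreover have "S_set e d v = {[d]}"
    if coprime: "coprime v (int (dtot d))" and nonzero: "\<exists>i. d i \<noteq> 0"
  proof -
    have "dtot d \<noteq> 0"
      using nonzero by (simp add: dtot_eq_0_iff)
    with nonzero have "[d] \<in> S_set e d v"
      by (simp add: S_set_eq is_partition_def)
    then show ?thesis
      using partition_eq_single_if_coprime[OF _ coprime _ nonzero] unfolding S_set_eq by blast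
  qed
  ultimately show ?thesis
    by (simp add: coprime_iff_gcd_eq_1)
qed

end
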